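(* Let $a,b,c\in\mathbb R$. The sine polynomial $a\sin(x)+b\sin(2x)+c\sin(3x)$ is nonnegative for all $x\in[0,\pi]$ if and only if either (i) $|b|\geq 4c$ and $a-2|b|+3c\geq 0$, or (ii) $|b|<4c$ and $a\geq c+\frac{b^2}{4c}$. In all cases, a necessary condition for this nonnegativity is $a\geq |b|$. *)

theory Defs
  imports Complex_Main
begin

end

theory Submission
  imports Defs "HOL-Analysis.Analysis"
begin

text \<open>Since \<open>sin (2x)\<close> and \<open>sin (3x)\<close> are \<open>sin x\<close> times polynomials in \<open>cos x\<close>, the sine
polynomial equals \<open>sin x \<cdot> p (cos x)\<close> for the quadratic \<open>p t = 4c t\<^sup>2 + 2b t + a - c\<close>.
As \<open>sin x > 0\<close> on \<open>(0, \<pi>)\<close> and \<open>cos\<close> maps \<open>[0, \<pi>]\<close> onto \<open>[-1, 1]\<close>, nonnegativity is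
equivalent to \<open>p \<ge> 0\<close> on \<open>[-1, 1]\<close>. The minimum of \<open>p\<close> there is attained at the vertex
\<open>-b/(4c)\<close> when this lies inside the interval, i.e. when \<open>|b| < 4c\<close>, and at an endpoint
otherwise; this gives conditions (ii) and (i).\<close>

lemma sin_triple:
  fixes x :: real
  shows "sin (3 * x) = sin x * (4 * (cos x)\<^sup>2 - 1)"
proof -
  have "sin (3 * x) = sin (2 * x + x)" by (simp add: algebra_simps)
  then show ?thesis
    unfolding sin_add sin_double cos_double using sin_cos_squared_add[of x] by algebra
qed

lemma sine_polynomial_eq_sin_times_quadratic:
  fixes a b c x :: real
  shows "a * sin x + b * sin (2 * x) + c * sin (3 * x)
           = sin x * (4 * c * (cos x)\<^sup>2 + 2 * b * cos x + (a - c))"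
  unfolding sin_triple sin_double by (simp add: algebra_simps power2_eq_square)

lemma nonneg_sin_times_comp_cos_iff:
  fixes f :: "real \<Rightarrow> real"
  assumes "continuous_on {-1..1} f"
  shows "(\<forall>x\<in>{0..pi}. 0 \<le> sin x * f (cos x)) \<longleftrightarrow> (\<forall>t\<in>{-1..1}. 0 \<le> f t)"
proof
  assume "\<forall>t\<in>{-1..1}. 0 \<le> f t"
  then show "\<forall>x\<in>{0..pi}. 0 \<le> sin x * f (cos x)"
    by (simp add: sin_ge_zero)
next
  assume nonneg: "\<forall>x\<in>{0..pi}. 0 \<le> sin x * f (cos x)"
  have inner: "0 \<le> f t" if "t \<in> {-1<..<1}" for t
  proof -
    have "arccos t \<in> {0..pi}" "cos (arccos t) = t"
      using that by (auto simp: arccos_lbound arccos_ubound)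
    moreover have "sin (arccos t) > 0"
      using that by (simp add: sin_arccos abs_square_less_1 abs_less_iff)
    ultimately show ?thesis
      using nonneg by (metis zero_le_mult_iff not_le)
  qed
  show "\<forall>t\<in>{-1..1}. 0 \<le> f t"
    using continuous_ge_on_closure[of "{-1<..<1}" f] assms inner by simp
qed

lemma quadratic_nonneg_on_unit_interval_vertex:
  fixes \<alpha> \<beta> \<gamma> :: real
  assumes "\<bar>\<beta>\<bar> < 2 * \<alpha>"
  shows "(\<forall>t\<in>{-1..1}. 0 \<le> \<alpha> * t\<^sup>2 + \<beta> * t + \<gamma>) \<longleftrightarrow> \<beta>\<^sup>2 \<le> 4 * \<alpha> * \<gamma>"
proof
  have \<alpha>: "\<alpha> > 0" using assms by linarith
  assume nonneg: "\<forall>t\<in>{-1..1}. 0 \<le> \<alpha> * t\<^sup>2 + \<beta> * t + \<gamma>"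
  define t\<^sub>0 where "t\<^sub>0 = - \<beta> / (2 * \<alpha>)"
  have "\<bar>t\<^sub>0\<bar> \<le> 1"
    using assms \<alpha> by (simp add: t\<^sub>0_def abs_div)
  then have "t\<^sub>0 \<in> {-1..1}"
    by (simp add: abs_le_iff)
  then have "0 \<le> \<alpha> * t\<^sub>0\<^sup>2 + \<beta> * t\<^sub>0 + \<gamma>"
    using nonneg by blast
  also have "\<alpha> * t\<^sub>0\<^sup>2 + \<beta> * t\<^sub>0 + \<gamma> = (4 * \<alpha> * \<gamma> - \<beta>\<^sup>2) / (4 * \<alpha>)"
    using \<alpha> by (simp add: t\<^sub>0_def field_simps power2_eq_square)
  finally show "\<beta>\<^sup>2 \<le> 4 * \<alpha> * \<gamma>"
    using \<alpha> by (simp add: zero_le_divide_iff)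
next
  have \<alpha>: "\<alpha> > 0" using assms by linarith
  assume discr: "\<beta>\<^sup>2 \<le> 4 * \<alpha> * \<gamma>"
  show "\<forall>t\<in>{-1..1}. 0 \<le> \<alpha> * t\<^sup>2 + \<beta> * t + \<gamma>"
  proof
    fix t :: real
    have "4 * \<alpha> * (\<alpha> * t\<^sup>2 + \<beta> * t + \<gamma>) = (2 * \<alpha> * t + \<beta>)\<^sup>2 + (4 * \<alpha> * \<gamma> - \<beta>\<^sup>2)"
      by (simp add: algebra_simps power2_eq_square)
    then have "0 \<le> 4 * \<alpha> * (\<alpha> * t\<^sup>2 + \<beta> * t + \<gamma>)"
      using discr by simp
    then show "0 \<le> \<alpha> * t\<^sup>2 + \<beta> * t + \<gamma>"
      using \<alpha> by (simp add: zero_le_mult_iff)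
  qed
qed

lemma quadratic_nonneg_on_unit_interval_endpoints:
  fixes \<alpha> \<beta> \<gamma> :: real
  assumes "2 * \<alpha> \<le> \<bar>\<beta>\<bar>"
  shows "(\<forall>t\<in>{-1..1}. 0 \<le> \<alpha> * t\<^sup>2 + \<beta> * t + \<gamma>) \<longleftrightarrow> 0 \<le> \<alpha> - \<bar>\<beta>\<bar> + \<gamma>"
proof
  assume "\<forall>t\<in>{-1..1}. 0 \<le> \<alpha> * t\<^sup>2 + \<beta> * t + \<gamma>"
  then have "0 \<le> \<alpha> + \<beta> + \<gamma>" "0 \<le> \<alpha> - \<beta> + \<gamma>"
    by (auto dest: bspec[of _ _ 1] bspec[of _ _ "-1"])
  then show "0 \<le> \<alpha> - \<bar>\<beta>\<bar> + \<gamma>"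
    by (simp add: abs_if)
next
  assume endpoint: "0 \<le> \<alpha> - \<bar>\<beta>\<bar> + \<gamma>"
  show "\<forall>t\<in>{-1..1}. 0 \<le> \<alpha> * t\<^sup>2 + \<beta> * t + \<gamma>"
  proof
    fix t :: real
    assume "t \<in> {-1..1}"
    then have s: "0 \<le> \<bar>t\<bar>" "\<bar>t\<bar> \<le> 1"
      by auto
    have "\<alpha> * (1 + \<bar>t\<bar>) \<le> \<bar>\<beta>\<bar>"
    proof (cases "\<alpha> \<le> 0")
      case True
      then have "\<alpha> * (1 + \<bar>t\<bar>) \<le> 0"
        using s by (simp add: mult_nonpos_nonneg)
      then show ?thesis by linarith
    next
      case False
      then have "\<alpha> * (1 + \<bar>t\<bar>) \<le> \<alpha> * 2"
        using s by (intro mult_left_mono) auto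
      then show ?thesis using assms by linarith
    qed
    then have "0 \<le> (1 - \<bar>t\<bar>) * (\<bar>\<beta>\<bar> - \<alpha> * (1 + \<bar>t\<bar>))"
      using s by simp
    also have "\<dots> + (\<alpha> - \<bar>\<beta>\<bar> + \<gamma>) = \<alpha> * \<bar>t\<bar>\<^sup>2 - \<bar>\<beta>\<bar> * \<bar>t\<bar> + \<gamma>"
      by (simp add: algebra_simps power2_eq_square)
    also have "\<dots> \<le> \<alpha> * t\<^sup>2 + \<beta> * t + \<gamma>"
      by (simp add: abs_mult[symmetric] abs_ge_minus_self)
    finally show "0 \<le> \<alpha> * t\<^sup>2 + \<beta> * t + \<gamma>"
      using endpoint by linarith
  qed
qed

lemma abs_le_of_sine_polynomial_conditions:
  fixes a b c :: real
  assumes "(\<bar>b\<bar> \<ge> 4 * c \<and> a - 2 * \<bar>b\<bar> + 3 * c \<ge> 0) \<or> (\<bar>b\<bar> < 4 * c \<and> a \<ge> c + b\<^sup>2 / (4 * c))"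
  shows "\<bar>b\<bar> \<le> a"
  using assms
proof
  assume "\<bar>b\<bar> \<ge> 4 * c \<and> a - 2 * \<bar>b\<bar> + 3 * c \<ge> 0"
  then show ?thesis by linarith
next
  assume vertex: "\<bar>b\<bar> < 4 * c \<and> a \<ge> c + b\<^sup>2 / (4 * c)"
  then have c: "c > 0" by linarith
  have "0 \<le> (2 * c - \<bar>b\<bar>)\<^sup>2"
    by simp
  then have "4 * c * \<bar>b\<bar> \<le> 4 * c * c + b\<^sup>2"
    by (simp add: power2_eq_square algebra_simps abs_mult_self_eq)
  also have "\<dots> \<le> 4 * c * a"
    using vertex c by (simp add: field_simps)
  finally show ?thesis
    using c by simp
qed

theorem corollary1:
  fixes a b c :: real
  shows "((\<forall>x\<in>{0..pi}. a * sin x + b * sin (2 * x) + c * sin (3 * x) \<ge> 0) \<longleftrightarrow>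
           ((\<bar>b\<bar> \<ge> 4 * c \<and> a - 2 * \<bar>b\<bar> + 3 * c \<ge> 0) \<or>
            (\<bar>b\<bar> < 4 * c \<and> a \<ge> c + b\<^sup>2 / (4 * c))))
       \<and> ((\<forall>x\<in>{0..pi}. a * sin x + b * sin (2 * x) + c * sin (3 * x) \<ge> 0) \<longrightarrow> a \<ge> \<bar>b\<bar>)"
proof -
  have "(\<forall>x\<in>{0..pi}. a * sin x + b * sin (2 * x) + c * sin (3 * x) \<ge> 0) \<longleftrightarrow>
        (\<forall>t\<in>{-1..1}. 0 \<le> 4 * c * t\<^sup>2 + 2 * b * t + (a - c))"
    unfolding sine_polynomial_eq_sin_times_quadratic
    by (intro nonneg_sin_times_comp_cos_iff continuous_intros)
  also have "\<dots> \<longleftrightarrow> (\<bar>b\<bar> \<ge> 4 * c \<and> a - 2 * \<bar>b\<bar> + 3 * c \<ge> 0) \<or>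
                   (\<bar>b\<bar> < 4 * c \<and> a \<ge> c + b\<^sup>2 / (4 * c))"
  proof (cases "\<bar>b\<bar> < 4 * c")
    case True
    then have "c > 0" by linarith
    then have "(2 * b)\<^sup>2 \<le> 4 * (4 * c) * (a - c) \<longleftrightarrow> c + b\<^sup>2 / (4 * c) \<le> a"
      by (auto simp: field_simps power2_eq_square)
    then show ?thesis
      using True quadratic_nonneg_on_unit_interval_vertex[of "2 * b" "4 * c" "a - c"] by simp
  next
    case False
    then show ?thesis
      using quadratic_nonneg_on_unit_interval_endpoints[of "4 * c" "2 * b" "a - c"]
      by (simp add: abs_mult algebra_simps)
  qed
  finally show ?thesis
    using abs_le_of_sine_polynomial_conditions by blast
qed

end
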